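(* Let $A>0$ and suppose all antenna positions lie in the square $[-A/2,A/2]^2$. Assume $\mathbf A$ has full column rank, the matrix $\boldsymbol\Phi=\frac{2}{\sigma^2}\Re\{(\mathbf 1_2\otimes\mathbf R_{\mathbf S}^{\mathsf T})\odot\dot{\mathbf A}^{\mathsf H}\boldsymbol\Pi_{\mathbf A}^\perp\dot{\mathbf A}\}$ is positive definite (so $\mathrm{CRB}(\tilde{\mathbf q})=\boldsymbol\Phi^{-1}$), $\mathrm{var}(\tilde{\mathbf x})>0$, $\mathrm{var}(\tilde{\mathbf y})>0$, $\mathrm{var}(\tilde{\mathbf x})\mathrm{var}(\tilde{\mathbf y})>\mathrm{cov}(\tilde{\mathbf x},\tilde{\mathbf y})^2$, and the signal energies are equal: $\|\mathbf s_k\|_2^2=TP_{\mathrm s}$ for all $k$, with $P_{\mathrm s}>0$. Then $$\mathrm{tr}\big(\mathrm{CRB}(\tilde{\mathbf q})\big)\overset{(a)}{\ge}\frac{K\sigma^2\lambda^2}{8NTP_{\mathrm s}\pi^2}\left(\frac{1}{\mathrm{var}(\tilde{\mathbf x})-\frac{\mathrm{cov}(\tilde{\mathbf x},\tilde{\mathbf y})^2}{\mathrm{var}(\tilde{\mathbf y})}}+\frac{1}{\mathrm{var}(\tilde{\mathbf y})-\frac{\mathrm{cov}(\tilde{\mathbf x},\tilde{\mathbf y})^2}{\mathrm{var}(\tilde{\mathbf x})}}\right)\overset{(b)}{\ge}\frac{K\sigma^2\lambda^2}{NTP_{\mathrm s}A^2\pi^2}.$$ In particular, the same two lower bounds hold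 for the sample average $\tilde\psi(\tilde{\mathbf q})=\frac1M\sum_{m=1}^M\mathrm{tr}(\mathrm{CRB}_m(\tilde{\mathbf q}))$ over any $M$ realizations of target angles and signals each satisfying these assumptions with the same $P_{\mathrm s}$. Equality at (a) holds if and only if both: (i) for all $k\ne k'$ and all $\iota,\iota'\in\{\mathrm u,\mathrm v\}$, $\Re\{[\mathbf R_{\mathbf S}^{\mathsf T}]_{k,k'}\dot{\mathbf a}_\iota(\tilde{\mathbf q},\mathbf r_k)^{\mathsf H}\boldsymbol\Pi_{\mathbf A}^\perp\dot{\mathbf a}_{\iota'}(\tilde{\mathbf q},\mathbf r_{k'})\}=0$; and (ii) for all $k$ and $(\iota,\iota')\in\{(\mathrm u,\mathrm v),(\mathrm v,\mathrm u)\}$, $\mathbf A^{\mathsf H}\boldsymbol\Pi_k^\perp\big(\dot{\mathbf a}_\iota(\tilde{\mathbf q},\mathbf r_k)-\zeta^*_{\iota,k}\dot{\mathbf a}_{\iota'}(\tilde{\mathbf q},\mathbf r_k)\big)=\mathbf 0_{K\times1}$. Equality at (b) holds if and only if $\mathrm{cov}(\tilde{\mathbf x},\tilde{\mathbf y})=0$, $\mathrm{var}(\tilde{\mathbf x})=\mathrm{var}(\tilde{\mathbf y})$, $\mu(\tilde{\mathbf x})=\mu(\tilde{\mathbf y})=0$, and $x_n^2+y_n^2=A^2/2$ for all $n=1,\dots,N$.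
   Context: Fix $N>K\ge1$, $T\ge1$, $\lambda>0$, $\sigma^2>0$. Antenna positions $\mathbf q_n=[x_n,y_n]^{\mathsf T}\in\mathbb R^2$ ($n=1,\dots,N$), $\tilde{\mathbf q}=\{\mathbf q_n\}$, $\tilde{\mathbf x}=[x_1,\dots,x_N]^{\mathsf T}$, $\tilde{\mathbf y}=[y_1,\dots,y_N]^{\mathsf T}$; target coordinates $\mathbf r_k=[u_k,v_k]^{\mathsf T}\in\mathbb R^2$. Steering vector $\mathbf a(\tilde{\mathbf q},\mathbf r)\in\mathbb C^N$ with $n$-th entry $e^{\mathrm j\frac{2\pi}{\lambda}\mathbf q_n^{\mathsf T}\mathbf r}$; $\mathbf A=[\mathbf a(\tilde{\mathbf q},\mathbf r_1),\dots,\mathbf a(\tilde{\mathbf q},\mathbf r_K)]$. $\dot{\mathbf a}_{\mathrm u}(\tilde{\mathbf q},\mathbf r_k)$ has $n$-th entry $\mathrm j\frac{2\pi}{\lambda}x_ne^{\mathrm j\frac{2\pi}{\lambda}\mathbf q_n^{\mathsf T}\mathbf r_k}$, $\dot{\mathbf a}_{\mathrm v}(\tilde{\mathbf q},\mathbf r_k)$ has $n$-th entry $\mathrm j\frac{2\pi}{\lambda}y_ne^{\mathrm j\frac{2\pi}{\lambda}\mathbf q_n^{\mathsf T}\mathbf r_k}$; $\dot{\mathbf A}=[\dot{\mathbf a}_{\mathrm u}(\tilde{\mathbf q},\mathbf r_1),\dots,\dot{\mathbf a}_{\mathrm u}(\tilde{\mathbf q},\mathbf r_K),\dot{\mathbf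 a}_{\mathrm v}(\tilde{\mathbf q},\mathbf r_1),\dots,\dot{\mathbf a}_{\mathrm v}(\tilde{\mathbf q},\mathbf r_K)]\in\mathbb C^{N\times2K}$. Signals $\mathbf S=[\mathbf s_1,\dots,\mathbf s_K]^{\mathsf T}\in\mathbb C^{K\times T}$, $\mathbf R_{\mathbf S}=\mathbf S\mathbf S^{\mathsf H}$. $\boldsymbol\Pi_{\mathbf A}^\perp=\mathbf I_N-\mathbf A(\mathbf A^{\mathsf H}\mathbf A)^{-1}\mathbf A^{\mathsf H}$; $\boldsymbol\Pi_k^\perp=\mathbf I_N-\mathbf a(\tilde{\mathbf q},\mathbf r_k)\mathbf a(\tilde{\mathbf q},\mathbf r_k)^{\mathsf H}/\|\mathbf a(\tilde{\mathbf q},\mathbf r_k)\|_2^2$. $\mathbf 1_2$ is the $2\times2$ all-ones matrix; $\otimes$ Kronecker, $\odot$ Hadamard product. $\zeta^*_{\mathrm u,k}=\frac{\Re\{\dot{\mathbf a}_{\mathrm u}^{\mathsf H}\boldsymbol\Pi_k^\perp\dot{\mathbf a}_{\mathrm v}\}}{\|\boldsymbol\Pi_k^\perp\dot{\mathbf a}_{\mathrm v}\|_2^2}$, $\zeta^*_{\mathrm v,k}=\frac{\Re\{\dot{\mathbf a}_{\mathrm u}^{\mathsf H}\boldsymbol\Pi_k^\perp\dot{\mathbf a}_{\mathrm v}\}}{\|\boldsymbol\Pi_k^\perp\dot{\mathbf a}_{\mathrm u}\|_2^2}$ (vectors evaluated at $(\tilde{\mathbf q},\mathbf r_k)$). $\mu(\tilde{\mathbf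 x})=\frac1N\sum_nx_n$, $\mathrm{var}(\tilde{\mathbf x})=\frac1N\sum_n(x_n-\mu(\tilde{\mathbf x}))^2$ (same for $\tilde{\mathbf y}$), $\mathrm{cov}(\tilde{\mathbf x},\tilde{\mathbf y})=\frac1N\sum_n(x_n-\mu(\tilde{\mathbf x}))(y_n-\mu(\tilde{\mathbf y}))$. $\mathrm{CRB}_m(\tilde{\mathbf q})$ denotes the matrix $\boldsymbol\Phi^{-1}$ computed with the target angles and signals of the $m$-th realization. *)

theory Defs
  imports "HOL-Analysis.Analysis"
begin

(* Index conventions:
   'n :: finite  -- antenna index (N = CARD('n))
   'k :: finite  -- target index  (K = CARD('k))
   't :: finite  -- snapshot index (T = CARD('t))
   The 2K columns of \<dot>A are indexed by 'k + 'k : Inl k is the u-derivative column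
   of target k, Inr k the v-derivative column (block order [u-block, v-block]). *)

datatype dir = U | V

definition cadj :: "complex^'m^'n \<Rightarrow> complex^'n^'m" where
  "cadj M = (\<chi> i j. cnj (M$j$i))"

definition cinner :: "complex^'n \<Rightarrow> complex^'n \<Rightarrow> complex" where
  "cinner a b = (\<Sum>n\<in>UNIV. cnj (a$n) * b$n)"

definition couter :: "complex^'n \<Rightarrow> complex^'n \<Rightarrow> complex^'n^'n" where
  "couter a b = (\<chi> i j. a$i * cnj (b$j))"

definition steer :: "real \<Rightarrow> real^'n \<Rightarrow> real^'n \<Rightarrow> real^'k \<Rightarrow> real^'k \<Rightarrow> 'k \<Rightarrow> complex^'n" where
  "steer lam x y u v k = (\<chi> n. exp (\<i> * complex_of_real (2 * pi / lam * (x$n * u$k + y$n * v$k))))"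

definition steer_mat :: "real \<Rightarrow> real^'n \<Rightarrow> real^'n \<Rightarrow> real^'k \<Rightarrow> real^'k \<Rightarrow> complex^'k^'n" where
  "steer_mat lam x y u v = (\<chi> n k. steer lam x y u v k $ n)"

definition adot :: "real \<Rightarrow> real^'n \<Rightarrow> real^'n \<Rightarrow> real^'k \<Rightarrow> real^'k \<Rightarrow> dir \<Rightarrow> 'k \<Rightarrow> complex^'n" where
  "adot lam x y u v d k = (\<chi> n. \<i> * complex_of_real (2 * pi / lam) *
      complex_of_real (case d of U \<Rightarrow> x$n | V \<Rightarrow> y$n) * steer lam x y u v k $ n)"

definition adot_mat :: "real \<Rightarrow> real^'n \<Rightarrow> real^'n \<Rightarrow> real^'k \<Rightarrow> real^'k \<Rightarrow> complex^('k + 'k)^'n" where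
  "adot_mat lam x y u v = (\<chi> n j. (case j of Inl k \<Rightarrow> adot lam x y u v U k $ n
                                          | Inr k \<Rightarrow> adot lam x y u v V k $ n))"

definition RS :: "complex^'t^'k \<Rightarrow> complex^'k^'k" where
  "RS S = S ** cadj S"

definition proj_perp :: "complex^'k^'n \<Rightarrow> complex^'n^'n" where
  "proj_perp A = mat 1 - A ** matrix_inv (cadj A ** A) ** cadj A"

definition proj_perp_vec :: "complex^'n \<Rightarrow> complex^'n^'n" where
  "proj_perp_vec a = mat 1 - (\<chi> i j. couter a a $ i $ j / complex_of_real ((norm a)\<^sup>2))"

definition blk :: "'k + 'k \<Rightarrow> 'k" where
  "blk j = (case j of Inl k \<Rightarrow> k | Inr k \<Rightarrow> k)"

definition kron_ones2 :: "'a^'k^'k \<Rightarrow> 'a^('k + 'k)^('k + 'k)" where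
  "kron_ones2 M = (\<chi> i j. M $ blk i $ blk j)"

definition hadamard :: "'a::times^'m^'n \<Rightarrow> 'a^'m^'n \<Rightarrow> 'a^'m^'n" where
  "hadamard P Q = (\<chi> i j. P$i$j * Q$i$j)"

definition Phi :: "real \<Rightarrow> real \<Rightarrow> real^'n \<Rightarrow> real^'n \<Rightarrow> real^'k \<Rightarrow> real^'k \<Rightarrow> complex^'t^'k
                   \<Rightarrow> real^('k + 'k)^('k + 'k)" where
  "Phi lam sigma2 x y u v S =
     (let Ad = adot_mat lam x y u v;
          H = hadamard (kron_ones2 (transpose (RS S)))
                       (cadj Ad ** proj_perp (steer_mat lam x y u v) ** Ad)
      in (\<chi> i j. 2 / sigma2 * Re (H $ i $ j)))"

definition CRB :: "real \<Rightarrow> real \<Rightarrow> real^'n \<Rightarrow> real^'n \<Rightarrow> real^'k \<Rightarrow> real^'k \<Rightarrow> complex^'t^'k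
                   \<Rightarrow> real^('k + 'k)^('k + 'k)" where
  "CRB lam sigma2 x y u v S = matrix_inv (Phi lam sigma2 x y u v S)"

definition pos_def :: "real^'m^'m \<Rightarrow> bool" where
  "pos_def M \<longleftrightarrow> transpose M = M \<and> (\<forall>z. z \<noteq> 0 \<longrightarrow> z \<bullet> (M *v z) > 0)"

definition full_col_rank :: "complex^'m^'n \<Rightarrow> bool" where
  "full_col_rank M \<longleftrightarrow> (\<forall>c. M *v c = 0 \<longrightarrow> c = 0)"

definition mean :: "real^'n \<Rightarrow> real" where
  "mean x = (\<Sum>n\<in>UNIV. x$n) / real CARD('n)"

definition cov :: "real^'n \<Rightarrow> real^'n \<Rightarrow> real" where
  "cov x y = (\<Sum>n\<in>UNIV. (x$n - mean x) * (y$n - mean y)) / real CARD('n)"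

definition var :: "real^'n \<Rightarrow> real" where
  "var x = (\<Sum>n\<in>UNIV. (x$n - mean x)\<^sup>2) / real CARD('n)"

definition sig_energy :: "complex^'t^'k \<Rightarrow> 'k \<Rightarrow> real" where
  "sig_energy S k = (\<Sum>t\<in>UNIV. (cmod (S$k$t))\<^sup>2)"

definition zeta :: "real \<Rightarrow> real^'n \<Rightarrow> real^'n \<Rightarrow> real^'k \<Rightarrow> real^'k \<Rightarrow> dir \<Rightarrow> 'k \<Rightarrow> real" where
  "zeta lam x y u v d k =
     (let P = proj_perp_vec (steer lam x y u v k);
          au = adot lam x y u v U k; av = adot lam x y u v V k
      in Re (cinner au (P *v av)) /
         (case d of U \<Rightarrow> (norm (P *v av))\<^sup>2 | V \<Rightarrow> (norm (P *v au))\<^sup>2))"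

definition realization_ok :: "real \<Rightarrow> real \<Rightarrow> real \<Rightarrow> real^'n \<Rightarrow> real^'n \<Rightarrow> real^'k \<Rightarrow> real^'k
                               \<Rightarrow> complex^'t^'k \<Rightarrow> bool" where
  "realization_ok lam sigma2 Ps x y u v S \<longleftrightarrow>
     full_col_rank (steer_mat lam x y u v) \<and>
     pos_def (Phi lam sigma2 x y u v S) \<and>
     (\<forall>k. sig_energy S k = real CARD('t) * Ps)"

end

theory Submission
  imports Defs
begin

(* For each of the 2K coordinates i, positive definiteness of \<Phi> gives the variational formula
   e_i' \<Phi>\<inverse> e_i = max over z of (2 z'e_i - z'\<Phi>z), attained exactly when \<Phi> z = e_i.
   A test vector z supported on the (u, v)-block of target k only sees w = p a_u + q a_v, and then
   z'\<Phi>z = (2E/\<sigma>^2) Re (w^H \<Pi>_A^\<perp> w) with E = T P_s the signal energy. As a_k lies in the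
   range of A, \<Pi>_A^\<perp> w = \<Pi>_A^\<perp> \<Pi>_k^\<perp> w, and \<Pi>_k^\<perp> merely centres the antenna
   coordinates; hence z'\<Phi>z is at most (2E/\<sigma>^2)(2\<pi>/\<lambda>)^2 N [p q] \<Sigma> [p q]' with \<Sigma> the
   covariance matrix of the array, the defect being the squared norm of the part of \<Pi>_k^\<perp> w
   in the range of A. Taking for (p, q) the matching column of the inverse of this quadratic form
   and summing over i gives bound (a); equality forces both defects to vanish for every i, which
   unfolds to conditions (i) and (ii). Bound (b) is elementary: the bracket in (a) equals
   (var x + var y)/det \<Sigma> \<ge> 4/(var x + var y), and var x + var y \<le> A^2/2 on the square. *)

section \<open>Adjoints, inner products and orthogonal projection\<close>

lemma cinner_matrix_vector_left: "cinner (M *v u) w = cinner u (cadj M *v w)"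
proof -
  have "cinner (M *v u) w = (\<Sum>i\<in>UNIV. \<Sum>j\<in>UNIV. cnj (M$i$j) * cnj (u$j) * w$i)"
    unfolding cinner_def matrix_vector_mult_def by (simp add: sum_distrib_right)
  also have "\<dots> = (\<Sum>j\<in>UNIV. \<Sum>i\<in>UNIV. cnj (M$i$j) * cnj (u$j) * w$i)"
    by (rule sum.swap)
  also have "\<dots> = cinner u (cadj M *v w)"
    unfolding cinner_def matrix_vector_mult_def cadj_def by (simp add: sum_distrib_left mult_ac)
  finally show ?thesis .
qed

lemma cadj_cadj [simp]: "cadj (cadj M) = M"
  by (simp add: cadj_def vec_eq_iff)

lemma cinner_matrix_vector_right: "cinner u (M *v w) = cinner (cadj M *v u) w"
  using cinner_matrix_vector_left[of "cadj M" u w] by simp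

lemma cinner_add_left: "cinner (a + b) c = cinner a c + cinner b c"
  by (simp add: cinner_def distrib_right sum.distrib)

lemma cinner_add_right: "cinner c (a + b) = cinner c a + cinner c b"
  by (simp add: cinner_def distrib_left sum.distrib)

lemma cinner_diff_right: "cinner c (a - b) = cinner c a - cinner c b"
  by (simp add: cinner_def right_diff_distrib sum_subtractf)

lemma cinner_scaleR_left: "cinner (r *\<^sub>R a) c = complex_of_real r * cinner a c"
  by (simp add: cinner_def sum_distrib_left scaleR_conv_of_real[where 'a=complex] mult_ac)

lemma cinner_scaleR_right: "cinner c (r *\<^sub>R a) = complex_of_real r * cinner c a"
  by (simp add: cinner_def sum_distrib_left scaleR_conv_of_real[where 'a=complex] mult_ac)

lemma Re_cinner: "Re (cinner a b) = a \<bullet> b"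
  by (simp add: cinner_def inner_vec_def inner_complex_def)

lemma cinner_self: "cinner a a = complex_of_real ((norm a)\<^sup>2)"
proof -
  have "Im (cinner a a) = 0"
    by (simp add: cinner_def algebra_simps)
  then show ?thesis
    by (simp add: complex_eq_iff Re_cinner power2_norm_eq_inner)
qed

lemma cinner_zero_right [simp]: "cinner c 0 = 0"
  by (simp add: cinner_def)

lemma cinner_self_eq_0_iff: "cinner a a = 0 \<longleftrightarrow> a = 0"
  by (simp add: cinner_self)

lemma matrix_vector_mult_scaleR_complex:
  "(M :: complex^'m^'n) *v (r *\<^sub>R w) = r *\<^sub>R (M *v w)"
  by (simp add: matrix_vector_mult_def vec_eq_iff scaleR_conv_of_real[where 'a=complex] sum_distrib_left mult_ac)

lemma of_real_scalar_mult: "complex_of_real r *s w = r *\<^sub>R w"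
  by (simp add: vec_eq_iff scaleR_conv_of_real[where 'a=complex])

lemma scaleR_pair_eq_0_iff:
  fixes a b :: "'a::real_vector"
  assumes "p * q' - q * p' \<noteq> 0"
  shows "p *\<^sub>R a + q *\<^sub>R b = 0 \<and> p' *\<^sub>R a + q' *\<^sub>R b = 0 \<longleftrightarrow> a = 0 \<and> b = 0"
proof
  assume h: "p *\<^sub>R a + q *\<^sub>R b = 0 \<and> p' *\<^sub>R a + q' *\<^sub>R b = 0"
  have "(p * q' - q * p') *\<^sub>R a = q' *\<^sub>R (p *\<^sub>R a + q *\<^sub>R b) - q *\<^sub>R (p' *\<^sub>R a + q' *\<^sub>R b)"
    "(p * q' - q * p') *\<^sub>R b = p *\<^sub>R (p' *\<^sub>R a + q' *\<^sub>R b) - p' *\<^sub>R (p *\<^sub>R a + q *\<^sub>R b)"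
    by (simp_all add: algebra_simps)
  then have "(p * q' - q * p') *\<^sub>R a = 0" "(p * q' - q * p') *\<^sub>R b = 0"
    using h by simp_all
  then show "a = 0 \<and> b = 0" using assms by simp
qed simp

lemma invertible_matrix_inv:
  assumes "invertible M"
  shows "M ** matrix_inv M = mat 1" and "matrix_inv M ** M = mat 1"
  using assms someI_ex[of "\<lambda>M'. M ** M' = mat 1 \<and> M' ** M = mat 1"]
  unfolding invertible_def matrix_inv_def by auto

lemma invertible_gram:
  assumes "full_col_rank A"
  shows "invertible (cadj A ** A)"
proof -
  have "c = 0" if "(cadj A ** A) *v c = 0" for c
  proof -
    have "cinner (A *v c) (A *v c) = cinner c ((cadj A ** A) *v c)"
      by (simp add: cinner_matrix_vector_left matrix_vector_mul_assoc)
    then show "c = 0"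
      using that assms by (simp add: cinner_self_eq_0_iff full_col_rank_def)
  qed
  then have "\<exists>B. B ** (cadj A ** A) = mat 1"
    by (subst matrix_left_invertible_ker) blast
  then show ?thesis
    by (subst invertible_left_inverse)
qed

definition ls_coeff :: "complex^'k^'n \<Rightarrow> complex^'n \<Rightarrow> complex^'k" where
  "ls_coeff A w = matrix_inv (cadj A ** A) *v (cadj A *v w)"

lemma proj_perp_apply: "proj_perp A *v w = w - A *v ls_coeff A w"
  unfolding proj_perp_def ls_coeff_def
  by (simp add: matrix_vector_mult_diff_rdistrib matrix_vector_mul_assoc matrix_mul_assoc)

context
  fixes A :: "complex^'k^'n"
  assumes rank: "full_col_rank A"
begin

lemma gram_ls_coeff: "(cadj A ** A) *v ls_coeff A w = cadj A *v w"
  unfolding ls_coeff_def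
  by (simp add: matrix_vector_mul_assoc matrix_mul_assoc
      invertible_matrix_inv[OF invertible_gram[OF rank]])

lemma ls_coeff_range: "ls_coeff A (A *v c) = c"
  unfolding ls_coeff_def
  by (simp add: matrix_vector_mul_assoc invertible_matrix_inv[OF invertible_gram[OF rank]])

lemma cadj_proj_perp: "cadj A *v (proj_perp A *v w) = 0"
  by (simp add: proj_perp_apply matrix_vector_mult_diff_distrib matrix_vector_mul_assoc
      gram_ls_coeff[symmetric])

lemma proj_perp_add_range: "proj_perp A *v (w + A *v c) = proj_perp A *v w"
proof -
  have "proj_perp A *v (A *v c) = 0"
    by (simp add: proj_perp_apply ls_coeff_range)
  then show ?thesis
    by (simp add: matrix_vector_right_distrib)
qed

lemma cinner_proj_perp_add_range:
  "cinner (w + A *v c) (proj_perp A *v (w + A *v c)) = cinner w (proj_perp A *v w)"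
  by (simp add: proj_perp_add_range cinner_add_left cinner_matrix_vector_left cadj_proj_perp)

lemma Re_cinner_proj_perp:
  "Re (cinner w (proj_perp A *v w)) = (norm w)\<^sup>2 - (norm (A *v ls_coeff A w))\<^sup>2"
proof -
  let ?l = "ls_coeff A w"
  have "cinner w (A *v ?l) = cinner ((cadj A ** A) *v ?l) ?l"
    by (simp only: cinner_matrix_vector_right gram_ls_coeff)
  also have "\<dots> = cinner (A *v ?l) (A *v ?l)"
    by (simp only: cinner_matrix_vector_right matrix_vector_mul_assoc)
  finally show ?thesis
    by (simp add: proj_perp_apply cinner_diff_right cinner_self)
qed

lemma ls_coeff_eq_0_iff: "A *v ls_coeff A w = 0 \<longleftrightarrow> cadj A *v w = 0"
proof
  assume "A *v ls_coeff A w = 0"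
  then show "cadj A *v w = 0"
    using gram_ls_coeff[of w] by (simp add: matrix_vector_mul_assoc[symmetric])
qed (simp add: ls_coeff_def)

end

section \<open>A variational formula for the inverse of a positive definite matrix\<close>

lemma pos_def_invertible:
  assumes "pos_def (M :: real^'m^'m)"
  shows "invertible M"
proof -
  have "c = 0" if "M *v c = 0" for c
    using that assms unfolding pos_def_def by force
  then have "\<exists>B. B ** M = mat 1"
    by (subst matrix_left_invertible_ker) blast
  then show ?thesis
    by (subst invertible_left_inverse)
qed

lemma pos_def_inner_commute:
  assumes "pos_def (M :: real^'m^'m)"
  shows "z \<bullet> (M *v w) = w \<bullet> (M *v z)"
proof -
  have "transpose M = M"
    using assms by (simp add: pos_def_def)
  moreover have "z \<bullet> (M *v w) = (transpose M *v z) \<bullet> w"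
    by (simp add: dot_lmul_matrix)
  ultimately show ?thesis
    by (simp add: inner_commute)
qed

text \<open>The gap is d' M d with d = z - M\<inverse> b.\<close>
lemma pos_def_inv_quadratic_gap:
  fixes M :: "real^'m^'m" and b z :: "real^'m"
  assumes pd: "pos_def M"
  defines "gap \<equiv> b \<bullet> (matrix_inv M *v b) - (2 * (z \<bullet> b) - z \<bullet> (M *v z))"
  shows "gap \<ge> 0" and "gap = 0 \<longleftrightarrow> M *v z = b"
proof -
  note inv = invertible_matrix_inv[OF pos_def_invertible[OF pd]]
  define x where "x = matrix_inv M *v b"
  have Mx: "M *v x = b"
    by (simp add: x_def matrix_vector_mul_assoc inv)
  define d where "d = z - x"
  have "d \<bullet> (M *v d) = z \<bullet> (M *v z) - z \<bullet> (M *v x) - x \<bullet> (M *v z) + x \<bullet> (M *v x)"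
    by (simp add: d_def matrix_vector_mult_diff_distrib inner_diff_left inner_diff_right)
  also have "x \<bullet> (M *v z) = z \<bullet> (M *v x)"
    using pos_def_inner_commute[OF pd] by simp
  finally have gap: "gap = d \<bullet> (M *v d)"
    unfolding gap_def using Mx by (simp add: x_def inner_commute)
  have pos: "d \<bullet> (M *v d) > 0" if "d \<noteq> 0"
    using pd that unfolding pos_def_def by blast
  show "gap \<ge> 0"
    unfolding gap using pos by (cases "d = 0") (auto intro: less_imp_le)
  have "gap = 0 \<longleftrightarrow> d = 0"
    unfolding gap using pos by (cases "d = 0") auto
  also have "d = 0 \<longleftrightarrow> M *v z = b"
  proof
    assume "M *v z = b"
    then have "matrix_inv M *v (M *v z) = x" by (simp add: x_def)
    then show "d = 0" by (simp add: d_def matrix_vector_mul_assoc inv)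
  next
    assume "d = 0"
    then have "z = x" by (simp add: d_def)
    then show "M *v z = b" using Mx by blast
  qed
  finally show "gap = 0 \<longleftrightarrow> M *v z = b" .
qed

lemma matrix_vector_mult_axis: "((M :: 'a::comm_ring_1^'m^'n) *v axis j c) $ i = M$i$j * c"
  unfolding matrix_vector_mult_def axis_def
  by (simp add: if_distrib[of "\<lambda>z. _ * z"] cong: if_cong)

lemma trace_eq_sum_axis: "trace (X :: real^'m^'m) = (\<Sum>i\<in>UNIV. axis i 1 \<bullet> (X *v axis i 1))"
  by (simp add: trace_def inner_axis' matrix_vector_mult_axis)

section \<open>Centred antenna coordinates\<close>

definition centered :: "real^'n \<Rightarrow> real^'n" where
  "centered w = (\<chi> n. w$n - mean w)"

lemma sum_centered: "(\<Sum>n\<in>UNIV. centered w $ n) = 0"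
  by (simp add: centered_def mean_def sum_subtractf card_gt_0_iff)

lemma mean_centered: "mean (centered w) = 0"
  by (simp add: mean_def sum_centered)

lemma cov_centered_left: "cov (centered v) w = cov v w"
  unfolding cov_def mean_centered by (simp add: centered_def)

lemma inner_centered: "v \<bullet> centered w = real CARD('n) * cov v (w :: real^'n)"
proof -
  have "v \<bullet> centered w
      = (\<Sum>n\<in>UNIV. (v$n - mean v) * centered w $ n) + mean v * (\<Sum>n\<in>UNIV. centered w $ n)"
    by (simp add: inner_vec_def sum_distrib_left sum.distrib[symmetric] algebra_simps)
  also have "\<dots> = (\<Sum>n\<in>UNIV. (v$n - mean v) * centered w $ n)"
    by (simp only: sum_centered mult_zero_right add_0_right)
  finally show ?thesis
    by (simp add: cov_def centered_def card_gt_0_iff)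
qed

lemma inner_centered_self: "centered w \<bullet> centered w = real CARD('n) * var (w :: real^'n)"
  by (simp add: inner_vec_def centered_def var_def power2_eq_square card_gt_0_iff)

lemma cov_commute: "cov v w = cov w v"
  by (simp add: cov_def mult.commute)

lemma cov_self: "cov w w = var w"
  by (simp add: cov_def var_def power2_eq_square)

lemma mean_lin: "mean (p *\<^sub>R v + q *\<^sub>R w) = p * mean v + q * mean (w :: real^'n)"
  by (simp add: mean_def sum.distrib sum_distrib_left[symmetric] add_divide_distrib)

lemma centered_lin: "centered (p *\<^sub>R v + q *\<^sub>R w) = p *\<^sub>R centered v + q *\<^sub>R centered w"
  by (simp add: centered_def mean_lin vec_eq_iff algebra_simps)

lemma cov_lin_right: "cov u (p *\<^sub>R v + q *\<^sub>R w) = p * cov u v + q * cov u (w :: real^'n)"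
proof -
  have "real CARD('n) * cov u (p *\<^sub>R v + q *\<^sub>R w) = real CARD('n) * (p * cov u v + q * cov u w)"
    by (simp only: inner_centered[symmetric] centered_lin inner_add_right inner_scaleR_right)
      (simp add: algebra_simps inner_centered)
  then show ?thesis
    by (simp add: card_gt_0_iff)
qed

lemma var_eq_mean_sq: "var (x :: real^'n::finite) = (\<Sum>n\<in>UNIV. (x$n)\<^sup>2) / real CARD('n) - (mean x)\<^sup>2"
proof -
  have N: "real CARD('n) > 0" by (simp add: card_gt_0_iff)
  have sx: "(\<Sum>n\<in>UNIV. x$n) = real CARD('n) * mean x" using N by (simp add: mean_def)
  have "(\<Sum>n\<in>UNIV. (x$n - mean x)\<^sup>2)
      = (\<Sum>n\<in>UNIV. (x$n)\<^sup>2) + real CARD('n) * (mean x)\<^sup>2 - 2 * mean x * (\<Sum>n\<in>UNIV. x$n)"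
    by (simp add: power2_diff sum.distrib sum_subtractf sum_distrib_left sum_distrib_right mult_ac)
  then show ?thesis
    unfolding var_def sx using N by (simp add: field_simps power2_eq_square)
qed

lemma var_add_var_le:
  fixes x y :: "real^'n::finite"
  assumes sq: "\<forall>n. \<bar>x$n\<bar> \<le> A / 2 \<and> \<bar>y$n\<bar> \<le> A / 2"
  shows "var x + var y \<le> A\<^sup>2 / 2"
    and "var x + var y = A\<^sup>2 / 2 \<longleftrightarrow> mean x = 0 \<and> mean y = 0 \<and> (\<forall>n. (x$n)\<^sup>2 + (y$n)\<^sup>2 = A\<^sup>2 / 2)"
proof -
  define N where "N = real CARD('n)"
  have N: "N > 0" by (simp add: N_def card_gt_0_iff)
  have pt: "(x$n)\<^sup>2 + (y$n)\<^sup>2 \<le> A\<^sup>2 / 2" for n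
  proof -
    have "\<bar>x$n\<bar> \<le> A/2" "\<bar>y$n\<bar> \<le> A/2"
      using sq by auto
    then have "\<bar>x$n\<bar>\<^sup>2 \<le> (A/2)\<^sup>2" "\<bar>y$n\<bar>\<^sup>2 \<le> (A/2)\<^sup>2"
      by (meson abs_ge_zero power_mono)+
    then show ?thesis by (simp add: power_divide)
  qed
  define gap where "gap = (\<Sum>n\<in>UNIV. A\<^sup>2 / 2 - ((x$n)\<^sup>2 + (y$n)\<^sup>2))"
  have gap: "gap \<ge> 0" "gap = 0 \<longleftrightarrow> (\<forall>n. (x$n)\<^sup>2 + (y$n)\<^sup>2 = A\<^sup>2 / 2)"
    unfolding gap_def using pt by (auto simp: sum_nonneg sum_nonneg_eq_0_iff)
  have "var x + var y = ((\<Sum>n\<in>UNIV. (x$n)\<^sup>2) + (\<Sum>n\<in>UNIV. (y$n)\<^sup>2)) / N - (mean x)\<^sup>2 - (mean y)\<^sup>2"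
    unfolding var_eq_mean_sq N_def by (simp add: add_divide_distrib)
  also have "(\<Sum>n\<in>UNIV. (x$n)\<^sup>2) + (\<Sum>n\<in>UNIV. (y$n)\<^sup>2) = N * (A\<^sup>2 / 2) - gap"
    by (simp add: gap_def N_def sum_subtractf sum.distrib)
  also have "(N * (A\<^sup>2 / 2) - gap) / N = A\<^sup>2 / 2 - gap / N"
    using N by (simp add: field_simps)
  finally have "var x + var y = A\<^sup>2 / 2 - gap / N - (mean x)\<^sup>2 - (mean y)\<^sup>2" .
  moreover have "gap / N \<ge> 0" "gap / N = 0 \<longleftrightarrow> gap = 0"
    using gap N by auto
  moreover have "(mean x)\<^sup>2 \<ge> 0" "(mean y)\<^sup>2 \<ge> 0"
    by simp_all
  ultimately show "var x + var y \<le> A\<^sup>2 / 2"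
    and "var x + var y = A\<^sup>2 / 2 \<longleftrightarrow> mean x = 0 \<and> mean y = 0 \<and> (\<forall>n. (x$n)\<^sup>2 + (y$n)\<^sup>2 = A\<^sup>2 / 2)"
    using gap(2) by (smt (verit) zero_eq_power2)+
qed

section \<open>Weighted steering vectors\<close>

definition coord :: "real^'n \<Rightarrow> real^'n \<Rightarrow> dir \<Rightarrow> real^'n" where
  "coord x y d = (case d of U \<Rightarrow> x | V \<Rightarrow> y)"

definition wsteer :: "real \<Rightarrow> real^'n \<Rightarrow> real^'n \<Rightarrow> real^'k \<Rightarrow> real^'k \<Rightarrow> real^'n \<Rightarrow> 'k \<Rightarrow> complex^'n" where
  "wsteer lam x y u v w k = (\<chi> n. \<i> * complex_of_real (2 * pi / lam * w$n) * steer lam x y u v k $ n)"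

lemma adot_eq_wsteer: "adot lam x y u v d k = wsteer lam x y u v (coord x y d) k"
  by (cases d) (simp_all add: adot_def wsteer_def coord_def vec_eq_iff)

lemma cmod_steer: "cmod (steer lam x y u v k $ n) = 1"
  by (simp add: steer_def)

lemma cnj_steer_mult_steer: "cnj (steer lam x y u v k $ n) * steer lam x y u v k $ n = 1"
  using complex_norm_square[of "steer lam x y u v k $ n"] by (simp add: cmod_steer mult.commute)

lemma norm_steer: "(norm (steer lam x y u v k :: complex^'n))\<^sup>2 = real CARD('n)"
  by (simp add: norm_vec_def L2_set_def sum_nonneg cmod_steer)

lemma wsteer_lin:
  "wsteer lam x y u v (p *\<^sub>R w1 + q *\<^sub>R w2) k
   = p *\<^sub>R wsteer lam x y u v w1 k + q *\<^sub>R wsteer lam x y u v w2 k"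
  by (simp add: wsteer_def vec_eq_iff scaleR_conv_of_real[where 'a=complex] algebra_simps)

lemma cinner_wsteer:
  "cinner (wsteer lam x y u v w1 k) (wsteer lam x y u v w2 k)
   = complex_of_real ((2 * pi / lam)\<^sup>2 * (w1 \<bullet> w2))"
proof -
  have "cnj (wsteer lam x y u v w1 k $ n) * wsteer lam x y u v w2 k $ n
      = complex_of_real ((2 * pi / lam)\<^sup>2 * (w1$n * w2$n))" for n
    using cnj_steer_mult_steer[of lam x y u v k n] by (simp add: wsteer_def power2_eq_square mult_ac)
  then show ?thesis
    by (simp add: cinner_def inner_vec_def sum_distrib_left)
qed

lemma norm_wsteer: "(norm (wsteer lam x y u v w k))\<^sup>2 = (2 * pi / lam)\<^sup>2 * (w \<bullet> w)"
proof -
  have "(norm (wsteer lam x y u v w k))\<^sup>2 = Re (cinner (wsteer lam x y u v w k) (wsteer lam x y u v w k))"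
    by (simp add: Re_cinner power2_norm_eq_inner)
  then show ?thesis
    by (simp add: cinner_wsteer)
qed

lemma wsteer_centered:
  "wsteer lam x y u v w k = wsteer lam x y u v (centered w) k
     + (\<i> * complex_of_real (2 * pi / lam * mean w)) *s steer lam x y u v k"
  by (simp add: wsteer_def centered_def vec_eq_iff algebra_simps diff_divide_distrib)

lemma cinner_steer_wsteer:
  "cinner (steer lam x y u v k) (wsteer lam x y u v w k)
   = \<i> * complex_of_real (2 * pi / lam * (\<Sum>n\<in>UNIV. w$n))"
proof -
  have "cnj (steer lam x y u v k $ n) * wsteer lam x y u v w k $ n
      = \<i> * complex_of_real (2 * pi / lam * w$n)" for n
    using cnj_steer_mult_steer[of lam x y u v k n] by (simp add: wsteer_def mult_ac)
  then show ?thesis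
    by (simp add: cinner_def sum_distrib_left)
qed

lemma proj_perp_vec_apply:
  "proj_perp_vec a *v w = w - (cinner a w / complex_of_real ((norm a)\<^sup>2)) *s a"
proof -
  let ?X = "\<chi> i j. couter a a $ i $ j / complex_of_real ((norm a)\<^sup>2)"
  have "(\<Sum>j\<in>UNIV. a$i * cnj (a$j) / complex_of_real ((norm a)\<^sup>2) * w$j)
      = (\<Sum>j\<in>UNIV. cnj (a$j) * w$j) / complex_of_real ((norm a)\<^sup>2) * a$i" for i
    by (simp add: sum_divide_distrib sum_distrib_right sum_distrib_left mult_ac)
  then have "?X *v w = (cinner a w / complex_of_real ((norm a)\<^sup>2)) *s a"
    unfolding couter_def cinner_def matrix_vector_mult_def by (simp add: vec_eq_iff)
  then show ?thesis
    unfolding proj_perp_vec_def by (simp add: matrix_vector_mult_diff_rdistrib)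
qed

lemma proj_perp_vec_wsteer:
  "proj_perp_vec (steer lam x y u v k) *v wsteer lam x y u v w k = wsteer lam x y u v (centered w) k"
proof -
  have "cinner (steer lam x y u v k) (wsteer lam x y u v w k) / complex_of_real ((norm (steer lam x y u v k))\<^sup>2)
      = \<i> * complex_of_real (2 * pi / lam * mean w)"
    by (simp add: cinner_steer_wsteer norm_steer mean_def)
  then show ?thesis
    using wsteer_centered[of lam x y u v w k] by (simp add: proj_perp_vec_apply)
qed

lemma steer_mat_axis: "steer_mat lam x y u v *v axis k c = c *s steer lam x y u v k"
  by (simp add: vec_eq_iff matrix_vector_mult_axis steer_mat_def mult.commute)

lemma wsteer_centered_add_range:
  "wsteer lam x y u v w k = wsteer lam x y u v (centered w) k
     + steer_mat lam x y u v *v axis k (\<i> * complex_of_real (2 * pi / lam * mean w))"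
  by (rule trans[OF wsteer_centered]) (simp add: steer_mat_axis)

section \<open>Block structure of the Fisher information matrix\<close>

lemma sum_UNIV_Plus:
  "sum f (UNIV :: ('a::finite + 'b::finite) set) = (\<Sum>k\<in>UNIV. f (Inl k)) + (\<Sum>k\<in>UNIV. f (Inr k))"
  using sum.Plus[of "UNIV :: 'a set" "UNIV :: 'b set" f] by (simp add: comp_def)

lemma all_dir: "(\<forall>d. P d) \<longleftrightarrow> P U \<and> P V"
  by (metis (full_types) dir.exhaust)

definition dir_of :: "'k + 'k \<Rightarrow> dir" where
  "dir_of j = (case j of Inl _ \<Rightarrow> U | Inr _ \<Rightarrow> V)"

definition block_index :: "dir \<Rightarrow> 'k \<Rightarrow> 'k + 'k" where
  "block_index d k = (case d of U \<Rightarrow> Inl k | V \<Rightarrow> Inr k)"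

lemma blk_block_index [simp]: "blk (block_index d k) = k"
  and dir_of_block_index [simp]: "dir_of (block_index d k) = d"
  by (cases d; simp add: block_index_def blk_def dir_of_def)+

lemma block_index_dir_of_blk: "block_index (dir_of j) (blk j) = j"
  by (cases j) (simp_all add: block_index_def blk_def dir_of_def)

lemma column_adot_mat: "column j (adot_mat lam x y u v) = adot lam x y u v (dir_of j) (blk j)"
  by (cases j) (simp_all add: column_def adot_mat_def dir_of_def blk_def vec_eq_iff)

lemma cadj_mult_mult_entry: "(cadj X ** M ** X) $ i $ j = cinner (column i X) (M *v column j X)"
proof -
  have "(cadj X ** M ** X) $ i $ j = (\<Sum>l\<in>UNIV. \<Sum>m\<in>UNIV. cnj (X$m$i) * M$m$l * X$l$j)"
    unfolding cadj_def matrix_matrix_mult_def by (simp add: sum_distrib_right)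
  also have "\<dots> = (\<Sum>m\<in>UNIV. \<Sum>l\<in>UNIV. cnj (X$m$i) * M$m$l * X$l$j)"
    by (rule sum.swap)
  also have "\<dots> = cinner (column i X) (M *v column j X)"
    unfolding cinner_def matrix_vector_mult_def column_def by (simp add: sum_distrib_left mult_ac)
  finally show ?thesis .
qed

lemma Phi_entry:
  "Phi lam sigma2 x y u v S $ i $ j = 2 / sigma2 * Re (RS S $ blk j $ blk i *
     cinner (adot lam x y u v (dir_of i) (blk i))
            (proj_perp (steer_mat lam x y u v) *v adot lam x y u v (dir_of j) (blk j)))"
  by (simp add: Phi_def hadamard_def kron_ones2_def cadj_mult_mult_entry column_adot_mat transpose_def)

lemma RS_diag: "RS S $ k $ k = complex_of_real (sig_energy S k)"
proof -
  have "S$k$t * cnj (S$k$t) = complex_of_real ((cmod (S$k$t))\<^sup>2)" for t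
    using complex_norm_square[of "S$k$t"] by simp
  then show ?thesis
    by (simp add: RS_def cadj_def matrix_matrix_mult_def sig_energy_def)
qed

definition block_diagonal :: "'a::zero^('k::finite + 'k)^('k + 'k) \<Rightarrow> bool" where
  "block_diagonal M \<longleftrightarrow> (\<forall>i j. blk i \<noteq> blk j \<longrightarrow> M $ i $ j = 0)"

lemma block_diagonal_iff:
  "block_diagonal M \<longleftrightarrow> (\<forall>k k'. k \<noteq> k' \<longrightarrow> (\<forall>d d'. M $ block_index d k $ block_index d' k' = 0))"
  unfolding block_diagonal_def by (metis blk_block_index block_index_dir_of_blk)

definition block_vec :: "'k::finite \<Rightarrow> real \<Rightarrow> real \<Rightarrow> real^('k + 'k)" where
  "block_vec k p q = (\<chi> j. if j = Inl k then p else if j = Inr k then q else 0)"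

lemma matrix_vector_mult_block_vec:
  "((M :: real^('k::finite + 'k)^'m) *v block_vec k p q) $ j = M$j$Inl k * p + M$j$Inr k * q"
  by (simp add: matrix_vector_mult_def block_vec_def sum_UNIV_Plus if_distrib[of "\<lambda>z. _ * z"]
      cong: if_cong)

lemma inner_block_vec: "block_vec k p q \<bullet> (w :: real^('k::finite + 'k)) = p * w$Inl k + q * w$Inr k"
  by (simp add: inner_vec_def block_vec_def sum_UNIV_Plus if_distrib[of "\<lambda>z. z * _"] cong: if_cong)

section \<open>Bound (a) and its equality case\<close>

locale crb_setting =
  fixes lam sigma2 E :: real and x y :: "real^'n::finite" and u v :: "real^'k::finite"
    and S :: "complex^'t::finite^'k"
  assumes lam: "lam > 0" and sigma2: "sigma2 > 0" and E: "E > 0"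
    and rank: "full_col_rank (steer_mat lam x y u v)"
    and pd: "pos_def (Phi lam sigma2 x y u v S)"
    and varx: "var x > 0" and vary: "var y > 0" and varcov: "var x * var y > (cov x y)\<^sup>2"
    and energy: "\<forall>k. sig_energy S k = E"
begin

abbreviation "Am \<equiv> steer_mat lam x y u v"
abbreviation "Ph \<equiv> Phi lam sigma2 x y u v S"
abbreviation "ws \<equiv> wsteer lam x y u v"

definition snr :: real where
  "snr = 2 * E / sigma2"

text \<open>coef d d' is the (d, d') entry of the inverse of snr (2\<pi>/\<lambda>)^2 N \<Sigma>,
  where \<Sigma> = [[var x, cov x y], [cov x y, var y]].\<close>
definition coef :: "dir \<Rightarrow> dir \<Rightarrow> real" where
  "coef d d' = (case (d, d') of (U, U) \<Rightarrow> var y | (V, V) \<Rightarrow> var x | _ \<Rightarrow> - cov x y)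
     / (snr * (2 * pi / lam)\<^sup>2 * real CARD('n) * (var x * var y - (cov x y)\<^sup>2))"

definition opt_comb :: "dir \<Rightarrow> real^'n" where
  "opt_comb d = coef d U *\<^sub>R x + coef d V *\<^sub>R y"

definition test_vec :: "'k + 'k \<Rightarrow> real^('k + 'k)" where
  "test_vec i = block_vec (blk i) (coef (dir_of i) U) (coef (dir_of i) V)"

lemma snr_pos: "snr > 0"
  using E sigma2 by (simp add: snr_def)

lemma gain_pos: "snr * (2 * pi / lam)\<^sup>2 * real CARD('n) > 0"
  using snr_pos lam by (simp add: card_gt_0_iff)

lemma coef_eq:
  defines "g \<equiv> snr * (2 * pi / lam)\<^sup>2 * real CARD('n)" and "D \<equiv> var x * var y - (cov x y)\<^sup>2"
  shows "coef U U = var y / (g * D)" "coef V V = var x / (g * D)"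
    and "coef U V = - cov x y / (g * D)" "coef V U = - cov x y / (g * D)"
  by (simp_all add: coef_def g_def D_def)

lemma cov_coord_opt_comb:
  "cov (coord x y d') (opt_comb d) = (if d = d' then 1 else 0) / (snr * (2 * pi / lam)\<^sup>2 * real CARD('n))"
proof -
  define g where "g = snr * (2 * pi / lam)\<^sup>2 * real CARD('n)"
  define D where "D = var x * var y - (cov x y)\<^sup>2"
  have "g > 0" "D > 0"
    using gain_pos varcov by (simp_all add: g_def D_def)
  have "cov (coord x y d') (opt_comb d)
      = coef d U * cov (coord x y d') x + coef d V * cov (coord x y d') y"
    unfolding opt_comb_def cov_lin_right ..
  also have "\<dots> = (if d = d' then 1 else 0) / g"
    using \<open>g > 0\<close> \<open>D > 0\<close>
    by (cases d; cases d')
      (simp_all add: coef_eq[folded g_def D_def] coord_def cov_self cov_commute[of y x] field_simps,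
        simp_all add: D_def power2_eq_square algebra_simps)
  finally show ?thesis
    by (simp add: g_def)
qed

lemma var_opt_comb: "var (opt_comb d) = coef d d / (snr * (2 * pi / lam)\<^sup>2 * real CARD('n))"
proof -
  have "var (opt_comb d) = cov (opt_comb d) (opt_comb d)"
    by (simp add: cov_self)
  also have "\<dots> = coef d U * cov (coord x y U) (opt_comb d) + coef d V * cov (coord x y V) (opt_comb d)"
    by (subst (2) opt_comb_def) (simp add: cov_lin_right cov_commute coord_def)
  finally show ?thesis
    by (cases d) (simp_all add: cov_coord_opt_comb)
qed

lemma coef_det: "coef U U * coef V V - coef U V * coef V U \<noteq> 0"
proof -
  define g where "g = snr * (2 * pi / lam)\<^sup>2 * real CARD('n)"
  define D where "D = var x * var y - (cov x y)\<^sup>2"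
  have "g > 0" "D > 0" using gain_pos varcov by (simp_all add: g_def D_def)
  moreover have "coef U U * coef V V - coef U V * coef V U = (var x * var y - (cov x y)\<^sup>2) / (g * D)\<^sup>2"
    by (simp add: coef_eq[folded g_def D_def] power2_eq_square diff_divide_distrib)
  ultimately show ?thesis
    by (simp add: D_def)
qed

lemma wsteer_comb: "ws (p *\<^sub>R x + q *\<^sub>R y) k = p *\<^sub>R adot lam x y u v U k + q *\<^sub>R adot lam x y u v V k"
  by (simp add: wsteer_lin adot_eq_wsteer coord_def)

lemma RS_diag_energy: "RS S $ k $ k = complex_of_real E"
  using energy by (simp add: RS_diag)

lemma Phi_block_vec:
  "(Ph *v block_vec k p q) $ j = 2 / sigma2 * Re (RS S $ k $ blk j *
     cinner (adot lam x y u v (dir_of j) (blk j)) (proj_perp Am *v ws (p *\<^sub>R x + q *\<^sub>R y) k))"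
proof -
  let ?a = "adot lam x y u v (dir_of j) (blk j)"
  have "cinner ?a (proj_perp Am *v ws (p *\<^sub>R x + q *\<^sub>R y) k)
      = complex_of_real p * cinner ?a (proj_perp Am *v adot lam x y u v U k)
        + complex_of_real q * cinner ?a (proj_perp Am *v adot lam x y u v V k)"
    by (simp add: wsteer_comb matrix_vector_right_distrib matrix_vector_mult_scaleR_complex
        cinner_add_right cinner_scaleR_right)
  then show ?thesis
    by (simp add: matrix_vector_mult_block_vec Phi_entry blk_def dir_of_def algebra_simps)
qed

lemma quadratic_block_vec:
  "block_vec k p q \<bullet> (Ph *v block_vec k p q)
   = snr * Re (cinner (ws (p *\<^sub>R x + q *\<^sub>R y) k) (proj_perp Am *v ws (p *\<^sub>R x + q *\<^sub>R y) k))"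
proof -
  let ?Pw = "proj_perp Am *v ws (p *\<^sub>R x + q *\<^sub>R y) k"
  have "cinner (ws (p *\<^sub>R x + q *\<^sub>R y) k) ?Pw
      = complex_of_real p * cinner (adot lam x y u v U k) ?Pw
        + complex_of_real q * cinner (adot lam x y u v V k) ?Pw"
    by (simp only: wsteer_comb cinner_add_left cinner_scaleR_left)
  then show ?thesis
    by (simp add: inner_block_vec Phi_block_vec blk_def dir_of_def RS_diag_energy snr_def
        algebra_simps)
qed

lemma Re_cinner_proj_perp_wsteer:
  "Re (cinner (ws w k) (proj_perp Am *v ws w k))
   = (2 * pi / lam)\<^sup>2 * real CARD('n) * var w
     - (norm (Am *v ls_coeff Am (ws (centered w) k)))\<^sup>2"
proof -
  have "cinner (ws w k) (proj_perp Am *v ws w k)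
      = cinner (ws (centered w) k) (proj_perp Am *v ws (centered w) k)"
    by (subst (1 2) wsteer_centered_add_range) (rule cinner_proj_perp_add_range[OF rank])
  moreover have "(norm (ws (centered w) k))\<^sup>2 = (2 * pi / lam)\<^sup>2 * real CARD('n) * var w"
    by (simp add: norm_wsteer inner_centered_self)
  ultimately show ?thesis
    by (simp add: Re_cinner_proj_perp[OF rank])
qed

definition leak :: "'k \<Rightarrow> real^'n \<Rightarrow> complex^'k" where
  "leak k w = cadj Am *v ws (centered w) k"

lemma leak_lin: "leak k (p *\<^sub>R w1 + q *\<^sub>R w2) = p *\<^sub>R leak k w1 + q *\<^sub>R leak k w2"
  by (simp add: leak_def centered_lin wsteer_lin matrix_vector_right_distrib
      matrix_vector_mult_scaleR_complex)

definition var_gap :: "'k + 'k \<Rightarrow> real" where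
  "var_gap i = axis i 1 \<bullet> (matrix_inv Ph *v axis i 1)
     - (2 * (test_vec i \<bullet> axis i 1) - test_vec i \<bullet> (Ph *v test_vec i))"

definition range_gap :: "'k + 'k \<Rightarrow> real" where
  "range_gap i = (norm (Am *v ls_coeff Am (ws (centered (opt_comb (dir_of i))) (blk i))))\<^sup>2"

lemma test_vec_axis: "test_vec i \<bullet> axis i 1 = coef (dir_of i) (dir_of i)"
  by (cases i) (simp_all add: test_vec_def inner_block_vec blk_def dir_of_def axis_def)

lemma quadratic_test_vec:
  "test_vec i \<bullet> (Ph *v test_vec i) = coef (dir_of i) (dir_of i) - snr * range_gap i"
proof -
  have "test_vec i \<bullet> (Ph *v test_vec i)
      = snr * ((2 * pi / lam)\<^sup>2 * real CARD('n) * var (opt_comb (dir_of i)) - range_gap i)"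
    by (simp add: test_vec_def quadratic_block_vec opt_comb_def[symmetric]
        Re_cinner_proj_perp_wsteer range_gap_def)
  moreover have "snr * ((2 * pi / lam)\<^sup>2 * real CARD('n) * var (opt_comb (dir_of i))) = coef (dir_of i) (dir_of i)"
    using gain_pos lam snr_pos by (simp add: var_opt_comb)
  ultimately show ?thesis
    by (simp add: right_diff_distrib)
qed

lemma diag_inv_Phi:
  "axis i 1 \<bullet> (matrix_inv Ph *v axis i 1) = coef (dir_of i) (dir_of i) + var_gap i + snr * range_gap i"
  by (simp add: var_gap_def test_vec_axis quadratic_test_vec)

lemma var_gap_nonneg: "var_gap i \<ge> 0"
  and var_gap_eq_0_iff: "var_gap i = 0 \<longleftrightarrow> Ph *v test_vec i = axis i 1"
  unfolding var_gap_def by (rule pos_def_inv_quadratic_gap[OF pd])+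

lemma range_gap_eq_0_iff:
  "range_gap i = 0 \<longleftrightarrow> leak (blk i) (opt_comb (dir_of i)) = 0"
  by (simp add: range_gap_def leak_def ls_coeff_eq_0_iff[OF rank])

lemma sum_coef_diag:
  "(\<Sum>i\<in>UNIV. coef (dir_of (i :: 'k + 'k)) (dir_of i))
   = real CARD('k) * sigma2 * lam\<^sup>2 / (8 * real CARD('n) * E * pi\<^sup>2) *
     (1 / (var x - (cov x y)\<^sup>2 / var y) + 1 / (var y - (cov x y)\<^sup>2 / var x))"
proof -
  define g where "g = snr * (2 * pi / lam)\<^sup>2 * real CARD('n)"
  define D where "D = var x * var y - (cov x y)\<^sup>2"
  have "g > 0" "D > 0" using gain_pos varcov by (simp_all add: g_def D_def)
  have g: "sigma2 * lam\<^sup>2 / (8 * real CARD('n) * E * pi\<^sup>2) = 1 / g"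
    using lam sigma2 E by (simp add: g_def snr_def field_simps power2_eq_square)
  have D: "1 / (var x - (cov x y)\<^sup>2 / var y) = var y / D" "1 / (var y - (cov x y)\<^sup>2 / var x) = var x / D"
    using varx vary by (simp_all add: D_def field_simps)
  have "(\<Sum>i\<in>UNIV. coef (dir_of (i :: 'k + 'k)) (dir_of i)) = real CARD('k) * (coef U U + coef V V)"
    by (simp only: sum_UNIV_Plus dir_of_def sum.case) (simp add: algebra_simps)
  also have "\<dots> = real CARD('k) * (1 / g) * (var y / D + var x / D)"
    using \<open>g > 0\<close> \<open>D > 0\<close> by (simp add: coef_eq[folded g_def D_def] field_simps)
  also have "\<dots> = real CARD('k) * (sigma2 * lam\<^sup>2 / (8 * real CARD('n) * E * pi\<^sup>2)) *
      (1 / (var x - (cov x y)\<^sup>2 / var y) + 1 / (var y - (cov x y)\<^sup>2 / var x))"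
    by (simp only: g D)
  finally show ?thesis
    by simp
qed

lemma trace_CRB_eq_sum_gaps:
  "trace (CRB lam sigma2 x y u v S)
   = real CARD('k) * sigma2 * lam\<^sup>2 / (8 * real CARD('n) * E * pi\<^sup>2) *
       (1 / (var x - (cov x y)\<^sup>2 / var y) + 1 / (var y - (cov x y)\<^sup>2 / var x))
     + (\<Sum>i\<in>UNIV. var_gap i + snr * range_gap i)"
  by (simp add: CRB_def trace_eq_sum_axis diag_inv_Phi sum.distrib sum_coef_diag add.assoc)

lemma gap_nonneg: "var_gap i + snr * range_gap i \<ge> 0"
  using var_gap_nonneg snr_pos by (simp add: range_gap_def)

lemma trace_CRB_ge:
  "real CARD('k) * sigma2 * lam\<^sup>2 / (8 * real CARD('n) * E * pi\<^sup>2) *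
     (1 / (var x - (cov x y)\<^sup>2 / var y) + 1 / (var y - (cov x y)\<^sup>2 / var x))
   \<le> trace (CRB lam sigma2 x y u v S)"
  unfolding trace_CRB_eq_sum_gaps using gap_nonneg by (simp add: sum_nonneg)

lemma trace_CRB_eq_bound_iff_gaps:
  "trace (CRB lam sigma2 x y u v S)
     = real CARD('k) * sigma2 * lam\<^sup>2 / (8 * real CARD('n) * E * pi\<^sup>2) *
       (1 / (var x - (cov x y)\<^sup>2 / var y) + 1 / (var y - (cov x y)\<^sup>2 / var x))
   \<longleftrightarrow> (\<forall>i. Ph *v test_vec i = axis i 1 \<and> leak (blk i) (opt_comb (dir_of i)) = 0)"
proof -
  have "var_gap i + snr * range_gap i = 0 \<longleftrightarrow> var_gap i = 0 \<and> range_gap i = 0" for i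
    using var_gap_nonneg[of i] snr_pos by (auto simp: range_gap_def add_nonneg_eq_0_iff)
  then show ?thesis
    unfolding trace_CRB_eq_sum_gaps using gap_nonneg
    by (simp add: sum_nonneg_eq_0_iff var_gap_eq_0_iff range_gap_eq_0_iff)
qed

lemma leak_opt_comb_eq_0_iff: "(\<forall>d. leak k (opt_comb d) = 0) \<longleftrightarrow> leak k x = 0 \<and> leak k y = 0"
  unfolding all_dir opt_comb_def leak_lin by (rule scaleR_pair_eq_0_iff[OF coef_det])

lemma Phi_block_vec_of_leak:
  assumes "leak k (p *\<^sub>R x + q *\<^sub>R y) = 0" and "blk j = k"
  shows "(Ph *v block_vec k p q) $ j
    = snr * (2 * pi / lam)\<^sup>2 * real CARD('n) * cov (coord x y (dir_of j)) (p *\<^sub>R x + q *\<^sub>R y)"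
proof -
  let ?w = "p *\<^sub>R x + q *\<^sub>R y"
  have "proj_perp Am *v ws ?w k = proj_perp Am *v ws (centered ?w) k"
    by (subst wsteer_centered_add_range) (rule proj_perp_add_range[OF rank])
  also have "\<dots> = ws (centered ?w) k"
    using assms(1) by (simp add: proj_perp_apply leak_def ls_coeff_eq_0_iff[OF rank])
  finally show ?thesis
    using assms(2)
    by (simp add: Phi_block_vec RS_diag_energy adot_eq_wsteer cinner_wsteer inner_centered snr_def)
qed

lemma block_diagonal_of_test_vec:
  assumes "\<forall>i. Ph *v test_vec i = axis i 1"
  shows "block_diagonal Ph"
  unfolding block_diagonal_def
proof (intro allI impI)
  fix j i' :: "'k + 'k"
  assume blk_ne: "blk j \<noteq> blk i'"
  define k where "k = blk i'"
  have "coef d U *\<^sub>R Ph$j$Inl k + coef d V *\<^sub>R Ph$j$Inr k = 0" for d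
  proof -
    have "(Ph *v test_vec (block_index d k)) $ j = 0"
      using assms blk_ne by (auto simp: axis_def k_def)
    then show ?thesis
      by (simp add: test_vec_def matrix_vector_mult_block_vec mult.commute)
  qed
  then have "Ph$j$Inl k = 0 \<and> Ph$j$Inr k = 0"
    using scaleR_pair_eq_0_iff[OF coef_det] by blast
  then show "Ph $ j $ i' = 0"
    by (cases i') (auto simp: k_def blk_def)
qed

lemma Phi_test_vec_of_block_diagonal:
  assumes bd: "block_diagonal Ph" and leak: "\<forall>k. leak k x = 0 \<and> leak k y = 0"
  shows "Ph *v test_vec i = axis i 1"
proof (subst vec_eq_iff, intro allI)
  fix j
  show "(Ph *v test_vec i) $ j = axis i 1 $ j"
  proof (cases "blk j = blk i")
    case True
    have "leak (blk i) (opt_comb (dir_of i)) = 0"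
      using leak leak_opt_comb_eq_0_iff by blast
    then have "(Ph *v test_vec i) $ j
        = snr * (2 * pi / lam)\<^sup>2 * real CARD('n) * cov (coord x y (dir_of j)) (opt_comb (dir_of i))"
      unfolding test_vec_def opt_comb_def using True by (rule Phi_block_vec_of_leak)
    also have "\<dots> = (if dir_of i = dir_of j then 1 else 0)"
      using gain_pos lam snr_pos by (simp add: cov_coord_opt_comb)
    also have "\<dots> = axis i 1 $ j"
      using True by (auto simp: axis_def) (metis block_index_dir_of_blk)
    finally show ?thesis .
  next
    case False
    then have "Ph$j$Inl (blk i) = 0" "Ph$j$Inr (blk i) = 0" "j \<noteq> i"
      using bd by (auto simp: block_diagonal_def blk_def)
    then show ?thesis
      by (simp add: test_vec_def matrix_vector_mult_block_vec axis_def)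
  qed
qed

lemma block_diagonal_Phi_iff:
  "block_diagonal Ph \<longleftrightarrow> (\<forall>k k'. k \<noteq> k' \<longrightarrow> (\<forall>d d'.
      Re (transpose (RS S) $ k $ k' *
          cinner (adot lam x y u v d k) (proj_perp Am *v adot lam x y u v d' k')) = 0))"
  using sigma2 by (simp add: block_diagonal_iff Phi_entry transpose_def)

lemma zeta_eq: "zeta lam x y u v U k = cov x y / var y" "zeta lam x y u v V k = cov x y / var x"
proof -
  have "2 * pi / lam \<noteq> 0" "real CARD('n) \<noteq> 0"
    using lam by simp_all
  then show "zeta lam x y u v U k = cov x y / var y" "zeta lam x y u v V k = cov x y / var x"
    by (simp_all add: zeta_def adot_eq_wsteer coord_def proj_perp_vec_wsteer cinner_wsteer
        norm_wsteer inner_centered cov_centered_left cov_self)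
qed

lemma cadj_proj_perp_vec_adot_diff:
  "cadj Am *v (proj_perp_vec (steer lam x y u v k) *v
      (adot lam x y u v d k - complex_of_real r *s adot lam x y u v d' k))
   = leak k (coord x y d) - r *\<^sub>R leak k (coord x y d')"
proof -
  let ?w = "1 *\<^sub>R coord x y d + (- r) *\<^sub>R coord x y d'"
  have "adot lam x y u v d k - complex_of_real r *s adot lam x y u v d' k
      = 1 *\<^sub>R ws (coord x y d) k + (- r) *\<^sub>R ws (coord x y d') k"
    by (simp add: adot_eq_wsteer of_real_scalar_mult)
  also have "\<dots> = ws ?w k"
    by (rule wsteer_lin[symmetric])
  finally have "cadj Am *v (proj_perp_vec (steer lam x y u v k) *v
      (adot lam x y u v d k - complex_of_real r *s adot lam x y u v d' k)) = leak k ?w"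
    by (simp add: proj_perp_vec_wsteer leak_def)
  then show ?thesis
    unfolding leak_lin by simp
qed

lemma leak_free_iff:
  "(\<forall>k. \<forall>(d, d') \<in> {(U, V), (V, U)}.
      cadj Am *v (proj_perp_vec (steer lam x y u v k) *v
        (adot lam x y u v d k - complex_of_real (zeta lam x y u v d k) *s adot lam x y u v d' k)) = 0)
   \<longleftrightarrow> (\<forall>k. leak k x = 0 \<and> leak k y = 0)"
proof -
  have "1 * 1 - (- (cov x y / var y)) * (- (cov x y / var x)) \<noteq> 0"
    using varx vary varcov by (simp add: field_simps power2_eq_square)
  from scaleR_pair_eq_0_iff[OF this]
  have "leak k x - (cov x y / var y) *\<^sub>R leak k y = 0 \<and> leak k y - (cov x y / var x) *\<^sub>R leak k x = 0
      \<longleftrightarrow> leak k x = 0 \<and> leak k y = 0" for k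
    by (simp add: algebra_simps)
  then show ?thesis
    by (simp add: cadj_proj_perp_vec_adot_diff zeta_eq coord_def)
qed

lemma trace_CRB_eq_bound_iff:
  "trace (CRB lam sigma2 x y u v S)
     = real CARD('k) * sigma2 * lam\<^sup>2 / (8 * real CARD('n) * E * pi\<^sup>2) *
       (1 / (var x - (cov x y)\<^sup>2 / var y) + 1 / (var y - (cov x y)\<^sup>2 / var x))
   \<longleftrightarrow> (\<forall>k k'. k \<noteq> k' \<longrightarrow> (\<forall>d d'.
          Re (transpose (RS S) $ k $ k' *
              cinner (adot lam x y u v d k) (proj_perp Am *v adot lam x y u v d' k')) = 0))
     \<and> (\<forall>k. \<forall>(d, d') \<in> {(U, V), (V, U)}.
          cadj Am *v (proj_perp_vec (steer lam x y u v k) *v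
            (adot lam x y u v d k - complex_of_real (zeta lam x y u v d k) *s adot lam x y u v d' k)) = 0)"
proof -
  have "(\<forall>i. leak (blk i) (opt_comb (dir_of i)) = 0) \<longleftrightarrow> (\<forall>k. leak k x = 0 \<and> leak k y = 0)"
    using leak_opt_comb_eq_0_iff by (metis blk_block_index dir_of_block_index)
  then have "(\<forall>i. Ph *v test_vec i = axis i 1 \<and> leak (blk i) (opt_comb (dir_of i)) = 0)
      \<longleftrightarrow> block_diagonal Ph \<and> (\<forall>k. leak k x = 0 \<and> leak k y = 0)"
    using block_diagonal_of_test_vec Phi_test_vec_of_block_diagonal by blast
  then show ?thesis
    unfolding trace_CRB_eq_bound_iff_gaps block_diagonal_Phi_iff[symmetric]
      leak_free_iff .
qed

end

section \<open>Bound (b) and the main theorem\<close>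

lemma inv_schur_sum_bound:
  fixes vx vy c B :: real
  assumes vx: "vx > 0" and vy: "vy > 0" and det: "vx * vy > c\<^sup>2" and B: "vx + vy \<le> B"
  shows "4 / B \<le> 1 / (vx - c\<^sup>2 / vy) + 1 / (vy - c\<^sup>2 / vx)"
    and "1 / (vx - c\<^sup>2 / vy) + 1 / (vy - c\<^sup>2 / vx) = 4 / B \<longleftrightarrow> c = 0 \<and> vx = vy \<and> vx + vy = B"
proof -
  define D where "D = vx * vy - c\<^sup>2"
  have "D > 0" using det by (simp add: D_def)
  have "vx + vy > 0" "B > 0" using vx vy B by simp_all
  have "vx - c\<^sup>2 / vy = D / vy" "vy - c\<^sup>2 / vx = D / vx"
    using vx vy by (simp_all add: D_def field_simps)
  then have sum_eq: "1 / (vx - c\<^sup>2 / vy) + 1 / (vy - c\<^sup>2 / vx) = (vx + vy) / D"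
    using vx vy \<open>D > 0\<close> by (simp add: field_simps)
  define t1 where "t1 = (vx + vy) * c\<^sup>2 / (D * (vx * vy))"
  define t2 where "t2 = (vx - vy)\<^sup>2 / (vx * vy * (vx + vy))"
  define t3 where "t3 = 4 * (B - (vx + vy)) / ((vx + vy) * B)"
  have t1: "t1 \<ge> 0" "t1 = 0 \<longleftrightarrow> c = 0"
    using \<open>D > 0\<close> vx vy by (auto simp: t1_def)
  have t2: "t2 \<ge> 0" "t2 = 0 \<longleftrightarrow> vx = vy"
    using vx vy by (auto simp: t2_def)
  have t3: "t3 \<ge> 0" "t3 = 0 \<longleftrightarrow> vx + vy = B"
    using B \<open>vx + vy > 0\<close> \<open>B > 0\<close> by (auto simp: t3_def)
  (* (vx + vy)/D - 4/B telescopes through (vx + vy)/(vx vy) and 4/(vx + vy). *)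
  have "(vx + vy) / D = (vx + vy) / (vx * vy) + t1"
    using \<open>D > 0\<close> vx vy by (simp add: t1_def D_def field_simps)
  moreover have "(vx + vy) / (vx * vy) - 4 / (vx + vy)
      = ((vx + vy) * (vx + vy) - 4 * (vx * vy)) / ((vx * vy) * (vx + vy))"
    using vx vy \<open>vx + vy > 0\<close> by (intro diff_frac_eq) auto
  then have "(vx + vy) / (vx * vy) = 4 / (vx + vy) + t2"
    by (simp add: t2_def power2_eq_square algebra_simps)
  moreover have "4 / z = 4 / B + 4 * (B - z) / (z * B)" if "z > 0" for z
    using that \<open>B > 0\<close> by (simp add: field_simps)
  then have "4 / (vx + vy) = 4 / B + t3"
    using \<open>vx + vy > 0\<close> by (simp add: t3_def)
  ultimately have "(vx + vy) / D = 4 / B + t1 + t2 + t3"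
    by simp
  then show "4 / B \<le> 1 / (vx - c\<^sup>2 / vy) + 1 / (vy - c\<^sup>2 / vx)"
    and "1 / (vx - c\<^sup>2 / vy) + 1 / (vy - c\<^sup>2 / vx) = 4 / B \<longleftrightarrow> c = 0 \<and> vx = vy \<and> vx + vy = B"
    unfolding sum_eq using t1 t2 t3 by linarith+
qed

lemma array_aperture_bound:
  fixes x y :: "real^'n::finite" and A c :: real
  assumes "c > 0" and sq: "\<forall>n. \<bar>x$n\<bar> \<le> A / 2 \<and> \<bar>y$n\<bar> \<le> A / 2"
    and varx: "var x > 0" and vary: "var y > 0" and varcov: "var x * var y > (cov x y)\<^sup>2"
  shows "c * (8 / A\<^sup>2) \<le> c * (1 / (var x - (cov x y)\<^sup>2 / var y) + 1 / (var y - (cov x y)\<^sup>2 / var x))"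
    and "c * (1 / (var x - (cov x y)\<^sup>2 / var y) + 1 / (var y - (cov x y)\<^sup>2 / var x)) = c * (8 / A\<^sup>2)
         \<longleftrightarrow> cov x y = 0 \<and> var x = var y \<and> mean x = 0 \<and> mean y = 0 \<and>
             (\<forall>n. (x$n)\<^sup>2 + (y$n)\<^sup>2 = A\<^sup>2 / 2)"
proof -
  have "4 / (A\<^sup>2 / 2) = 8 / A\<^sup>2" by simp
  note bound = inv_schur_sum_bound[OF varx vary varcov var_add_var_le(1)[OF sq], unfolded this]
  show "c * (8 / A\<^sup>2) \<le> c * (1 / (var x - (cov x y)\<^sup>2 / var y) + 1 / (var y - (cov x y)\<^sup>2 / var x))"
    using \<open>c > 0\<close> by (intro mult_left_mono bound(1)) simp
  show "c * (1 / (var x - (cov x y)\<^sup>2 / var y) + 1 / (var y - (cov x y)\<^sup>2 / var x)) = c * (8 / A\<^sup>2)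
         \<longleftrightarrow> cov x y = 0 \<and> var x = var y \<and> mean x = 0 \<and> mean y = 0 \<and>
             (\<forall>n. (x$n)\<^sup>2 + (y$n)\<^sup>2 = A\<^sup>2 / 2)"
    unfolding mult_cancel_left bound(2) var_add_var_le(2)[OF sq] using \<open>c > 0\<close> by auto
qed

lemma average_ge:
  assumes "M \<ge> 1" and "\<forall>m\<in>{1..M}. b \<le> f m"
  shows "b \<le> (\<Sum>m=1..M. f m) / real M"
proof -
  have "real M * b \<le> (\<Sum>m=1..M. f m)"
    using sum_mono[of "{1..M}" "\<lambda>_. b" f] assms(2) by simp
  then show ?thesis
    using assms(1) by (simp add: field_simps)
qed

lemma crb_setting_of_realization:
  assumes "realization_ok lam sigma2 Ps x y u v S"
    and "lam > 0" "sigma2 > 0" "Ps > 0" "var x > 0" "var y > 0" "var x * var y > (cov x y)\<^sup>2"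
  shows "crb_setting lam sigma2 (real CARD('t) * Ps) x y u v (S :: complex^'t::finite^'k::finite)"
  using assms by unfold_locales (auto simp: realization_ok_def card_gt_0_iff)

lemma crb_bound_of_realization:
  fixes S :: "complex^'t::finite^'k::finite" and x y :: "real^'n::finite"
  assumes "realization_ok lam sigma2 Ps x y u v S"
    and "lam > 0" "sigma2 > 0" "Ps > 0" "var x > 0" "var y > 0" "var x * var y > (cov x y)\<^sup>2"
  defines "bnd \<equiv> real CARD('k) * sigma2 * lam\<^sup>2 / (8 * real CARD('n) * real CARD('t) * Ps * pi\<^sup>2) *
              (1 / (var x - (cov x y)\<^sup>2 / var y) + 1 / (var y - (cov x y)\<^sup>2 / var x))"
  shows "trace (CRB lam sigma2 x y u v S) \<ge> bnd"
    and "trace (CRB lam sigma2 x y u v S) = bnd \<longleftrightarrow>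
          (\<forall>k k'. k \<noteq> k' \<longrightarrow> (\<forall>d d'.
              Re (transpose (RS S) $ k $ k' *
                  cinner (adot lam x y u v d k)
                         (proj_perp (steer_mat lam x y u v) *v adot lam x y u v d' k')) = 0))
          \<and> (\<forall>k. \<forall>(d, d') \<in> {(U, V), (V, U)}.
              cadj (steer_mat lam x y u v) *v
                (proj_perp_vec (steer lam x y u v k) *v
                   (adot lam x y u v d k - complex_of_real (zeta lam x y u v d k) *s adot lam x y u v d' k))
              = 0)"
  using crb_setting.trace_CRB_ge[OF crb_setting_of_realization[OF assms(1-7)]]
    crb_setting.trace_CRB_eq_bound_iff[OF crb_setting_of_realization[OF assms(1-7)]]
  unfolding bnd_def by (simp_all add: mult.assoc)

theorem theorem1:
  fixes lam sigma2 Ps A :: real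
    and x y :: "real^'n"
    and u v :: "real^'k"
    and S :: "complex^'t^'k"
  defines "K \<equiv> real CARD('k)" and "N \<equiv> real CARD('n)" and "T \<equiv> real CARD('t)"
  defines "bnd_a \<equiv> K * sigma2 * lam\<^sup>2 / (8 * N * T * Ps * pi\<^sup>2) *
              (1 / (var x - (cov x y)\<^sup>2 / var y) + 1 / (var y - (cov x y)\<^sup>2 / var x))"
      and "bnd_b \<equiv> K * sigma2 * lam\<^sup>2 / (N * T * Ps * A\<^sup>2 * pi\<^sup>2)"
  assumes NK: "CARD('n) > CARD('k)"
    and lam: "lam > 0" and sigma2: "sigma2 > 0" and A: "A > 0" and Ps: "Ps > 0"
    and square: "\<forall>n. \<bar>x$n\<bar> \<le> A / 2 \<and> \<bar>y$n\<bar> \<le> A / 2"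
    and rank: "full_col_rank (steer_mat lam x y u v)"
    and pd: "pos_def (Phi lam sigma2 x y u v S)"
    and varx: "var x > 0" and vary: "var y > 0"
    and varcov: "var x * var y > (cov x y)\<^sup>2"
    and energy: "\<forall>k. sig_energy S k = T * Ps"
  shows
    "trace (CRB lam sigma2 x y u v S) \<ge> bnd_a \<and> bnd_a \<ge> bnd_b

     \<and> (\<forall>(M::nat) (uu :: nat \<Rightarrow> real^'k) (vv :: nat \<Rightarrow> real^'k) (SS :: nat \<Rightarrow> complex^'t^'k).
          M \<ge> 1 \<and> (\<forall>m\<in>{1..M}. realization_ok lam sigma2 Ps x y (uu m) (vv m) (SS m)) \<longrightarrow>
          (let avg = (\<Sum>m=1..M. trace (CRB lam sigma2 x y (uu m) (vv m) (SS m))) / real M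
           in avg \<ge> bnd_a \<and> avg \<ge> bnd_b))

     \<and> (trace (CRB lam sigma2 x y u v S) = bnd_a \<longleftrightarrow>
          (\<forall>k k'. k \<noteq> k' \<longrightarrow> (\<forall>d d'.
              Re (transpose (RS S) $ k $ k' *
                  cinner (adot lam x y u v d k)
                         (proj_perp (steer_mat lam x y u v) *v adot lam x y u v d' k')) = 0))
          \<and> (\<forall>k. \<forall>(d, d') \<in> {(U, V), (V, U)}.
              cadj (steer_mat lam x y u v) *v
                (proj_perp_vec (steer lam x y u v k) *v
                   (adot lam x y u v d k - complex_of_real (zeta lam x y u v d k) *s adot lam x y u v d' k))
              = 0))

     \<and> (bnd_a = bnd_b \<longleftrightarrow>
          cov x y = 0 \<and> var x = var y \<and> mean x = 0 \<and> mean y = 0 \<and>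
          (\<forall>n. (x$n)\<^sup>2 + (y$n)\<^sup>2 = A\<^sup>2 / 2))"
proof -
  have ok: "realization_ok lam sigma2 Ps x y u v S"
    using rank pd energy by (simp add: realization_ok_def T_def)
  note bound_a = crb_bound_of_realization[where 'k = 'k and 't = 't, OF _ lam sigma2 Ps varx vary varcov,
      folded K_def N_def T_def, folded bnd_a_def]
  have "K * sigma2 * lam\<^sup>2 / (8 * N * T * Ps * pi\<^sup>2) > 0"
    using lam sigma2 Ps by (simp add: K_def N_def T_def card_gt_0_iff)
  note bound_b = array_aperture_bound[OF this square varx vary varcov, folded bnd_a_def]
  have bnd_b: "bnd_b = K * sigma2 * lam\<^sup>2 / (8 * N * T * Ps * pi\<^sup>2) * (8 / A\<^sup>2)"
    by (simp add: bnd_b_def ac_simps)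
  have average: "let avg = (\<Sum>m=1..M. trace (CRB lam sigma2 x y (uu m) (vv m) (SS m))) / real M
      in avg \<ge> bnd_a \<and> avg \<ge> bnd_b"
    if "M \<ge> 1 \<and> (\<forall>m\<in>{1..M}. realization_ok lam sigma2 Ps x y (uu m) (vv m) (SS m))"
    for M :: nat and uu vv :: "nat \<Rightarrow> real^'k" and SS :: "nat \<Rightarrow> complex^'t^'k"
  proof -
    have "bnd_a \<le> (\<Sum>m=1..M. trace (CRB lam sigma2 x y (uu m) (vv m) (SS m))) / real M"
      using that by (intro average_ge) (auto intro: bound_a(1))
    then show ?thesis
      using bound_b(1) by (simp add: Let_def bnd_b)
  qed
  show ?thesis
    unfolding bnd_b
    by (intro conjI allI impI bound_a[OF ok] bound_b average[unfolded bnd_b]) auto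
qed

end
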